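(* There does not exist an arrangement of lines in $\mathbb{C}\mathbb{P}^2$ defined over $\mathbb{R}$ (i.e. each line is the zero set of a linear form with real coefficients) which supports a $4$-net structure.
   Context: Let $\overline{\mathcal{A}}$ be a finite arrangement of lines in $\mathbb{C}\mathbb{P}^2$. A $4$-net (i.e. a $(4,d)$-net, $d\ge2$) on $\overline{\mathcal{A}}$ is a partition $\overline{\mathcal{A}}=\overline{\mathcal{A}}_1\sqcup\overline{\mathcal{A}}_2\sqcup\overline{\mathcal{A}}_3\sqcup\overline{\mathcal{A}}_4$ together with a set $\mathcal{X}\subset\mathbb{C}\mathbb{P}^2$ of points such that: (i) $|\overline{\mathcal{A}}_1|=\dots=|\overline{\mathcal{A}}_4|=d$; (ii) if $\overline{H}\in\overline{\mathcal{A}}_i$, $\overline{H}'\in\overline{\mathcal{A}}_j$ with $i\neq j$, then $\overline{H}\cap\overline{H}'\in\mathcal{X}$; (iii) for every $p\in\mathcal{X}$ and every $i$, exactly one line of $\overline{\mathcal{A}}_i$ passes through $p$; (iv) for any $\overline{H},\overline{H}'\in\overline{\mathcal{A}}_i$ there is a sequence $\overline{H}=\overline{H}'_0,\overline{H}'_1,\dots,\overline{H}'_r=\overline{H}'$ in $\overline{\mathcal{A}}_i$ with $\overline{H}'_{j-1}\cap\overline{H}'_j\notin\mathcal{X}$ for $1\le j\le r$. *)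

theory Defs
  imports Complex_Main
begin

type_synonym cvec = "complex \<times> complex \<times> complex"

definition cscale :: "complex \<Rightarrow> cvec \<Rightarrow> cvec" where
  "cscale c v = (case v of (x, y, z) \<Rightarrow> (c * x, c * y, c * z))"

definition proj_pt :: "cvec \<Rightarrow> cvec set" where
  "proj_pt v = {cscale c v | c. c \<noteq> 0}"

definition CP2 :: "cvec set set" where
  "CP2 = {proj_pt v | v. v \<noteq> (0, 0, 0)}"

definition proj_line :: "cvec \<Rightarrow> cvec set set" where
  "proj_line f = {p \<in> CP2. \<forall>v\<in>p. (case f of (a, b, c) \<Rightarrow> case v of (x, y, z) \<Rightarrow>
        a * x + b * y + c * z = 0)}"

definition real_line :: "cvec set set \<Rightarrow> bool" where
  "real_line L \<longleftrightarrow> (\<exists>a b c :: real. (a, b, c) \<noteq> (0, 0, 0) \<and>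
      L = proj_line (complex_of_real a, complex_of_real b, complex_of_real c))"

definition is_4net ::
  "cvec set set set \<Rightarrow> (nat \<Rightarrow> cvec set set set) \<Rightarrow> cvec set set \<Rightarrow> nat \<Rightarrow> bool" where
  "is_4net Arr A X d \<longleftrightarrow>
     d \<ge> 2 \<and> X \<subseteq> CP2 \<and>
     Arr = (\<Union>i\<in>{1..4}. A i) \<and>
     (\<forall>i\<in>{1..4}. \<forall>j\<in>{1..4}. i \<noteq> j \<longrightarrow> A i \<inter> A j = {}) \<and>
     (\<forall>i\<in>{1..4}. card (A i) = d) \<and>
     (\<forall>i\<in>{1..4}. \<forall>j\<in>{1..4}. \<forall>H\<in>A i. \<forall>H'\<in>A j. i \<noteq> j \<longrightarrow> H \<inter> H' \<subseteq> X) \<and>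
     (\<forall>p\<in>X. \<forall>i\<in>{1..4}. \<exists>!H. H \<in> A i \<and> p \<in> H) \<and>
     (\<forall>i\<in>{1..4}. \<forall>H\<in>A i. \<forall>H'\<in>A i.
        (H, H') \<in> {(K, K'). K \<in> A i \<and> K' \<in> A i \<and> \<not> (K \<inter> K' \<subseteq> X)}\<^sup>*)"

end

theory Submission
  imports Defs "HOL-Computational_Algebra.Polynomial"
begin

text \<open>Over the reals a 4-net contradicts the Sylvester--Gallai phenomenon, in Kelly's form. Two real
  lines meet in a single real point, so every point of the net is real, and in a suitable affine
  chart the whole configuration lives in the Euclidean plane. If a point \<open>p\<close> of the net lies off a
  line \<open>H\<close>, the lines through \<open>p\<close> from the three classes other than that of \<open>H\<close> meet \<open>H\<close> in three
  distinct points of the net. Two of them lie on the same side of the foot of the perpendicular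
  from \<open>p\<close>, and the nearer one is closer to the line joining \<open>p\<close> to the farther one than \<open>p\<close> is
  to \<open>H\<close>. So there is no non-incident pair at minimal distance, yet every net has a non-incident
  pair.\<close>

type_synonym rvec = "real \<times> real \<times> real"

fun rdot :: "rvec \<Rightarrow> rvec \<Rightarrow> real" where
  "rdot (a, b, c) (x, y, z) = a * x + b * y + c * z"

fun rcross :: "rvec \<Rightarrow> rvec \<Rightarrow> rvec" where
  "rcross (a, b, c) (x, y, z) = (b * z - c * y, c * x - a * z, a * y - b * x)"

fun rscale :: "real \<Rightarrow> rvec \<Rightarrow> rvec" where
  "rscale k (a, b, c) = (k * a, k * b, k * c)"

fun cvec_of :: "rvec \<Rightarrow> cvec" where
  "cvec_of (a, b, c) = (complex_of_real a, complex_of_real b, complex_of_real c)"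

lemma cscale_cscale: "cscale a (cscale b v) = cscale (a * b) v"
  by (cases v) (simp add: cscale_def mult.assoc)

lemma cscale_1 [simp]: "cscale 1 v = v"
  by (cases v) (simp add: cscale_def)

lemma proj_pt_cscale:
  assumes "k \<noteq> 0"
  shows "proj_pt (cscale k v) = proj_pt v"
proof -
  have "cscale c (cscale k v) \<in> proj_pt v" if "c \<noteq> 0" for c
    using that assms by (auto simp: proj_pt_def cscale_cscale)
  moreover have "cscale c v \<in> proj_pt (cscale k v)" if "c \<noteq> 0" for c
  proof -
    have "cscale c v = cscale (c / k) (cscale k v)"
      using assms by (simp add: cscale_cscale)
    with that assms show ?thesis
      unfolding proj_pt_def by auto
  qed
  ultimately show ?thesis
    unfolding proj_pt_def by blast
qed

lemma cvec_of_rscale: "cvec_of (rscale k x) = cscale (complex_of_real k) (cvec_of x)"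
  by (cases x) (simp add: cscale_def)

lemma cvec_of_eq_0_iff [simp]: "cvec_of x = (0, 0, 0) \<longleftrightarrow> x = (0, 0, 0)"
  by (cases x) auto

lemma rdot_rcross_left [simp]: "rdot n (rcross n m) = 0"
  by (cases n; cases m) (simp add: algebra_simps)

lemma rdot_rcross_right [simp]: "rdot m (rcross n m) = 0"
  by (cases n; cases m) (simp add: algebra_simps)

lemma rdot_self_pos:
  assumes "x \<noteq> (0, 0, 0)"
  shows "rdot x x > 0"
proof -
  obtain a b c where x: "x = (a, b, c)" by (cases x)
  have "a * a \<ge> 0" "b * b \<ge> 0" "c * c \<ge> 0" by simp_all
  moreover have "a * a > 0 \<or> b * b > 0 \<or> c * c > 0"
    using assms x by (auto simp: zero_less_mult_iff linorder_neq_iff)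
  ultimately have "a * a + b * b + c * c > 0" by linarith
  then show ?thesis using x by simp
qed

lemma rcross_eq_0_imp_rscale:
  assumes "rcross u c = (0, 0, 0)" "c \<noteq> (0, 0, 0)"
  shows "u = rscale (rdot u c / rdot c c) c"
proof -
  obtain u1 u2 u3 where u: "u = (u1, u2, u3)" by (cases u)
  obtain c1 c2 c3 where c: "c = (c1, c2, c3)" by (cases c)
  have e: "u2 * c3 - u3 * c2 = 0" "u3 * c1 - u1 * c3 = 0" "u1 * c2 - u2 * c1 = 0"
    using assms(1) by (auto simp: u c)
  have "u1 * rdot c c = rdot u c * c1" "u2 * rdot c c = rdot u c * c2" "u3 * rdot c c = rdot u c * c3"
    unfolding u c using e by (simp_all, algebra+)
  with rdot_self_pos[OF assms(2)] show ?thesis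
    unfolding u c by (simp add: field_simps)
qed

lemma proj_pt_mem_proj_line_iff:
  assumes "x \<noteq> (0, 0, 0)"
  shows "proj_pt (cvec_of x) \<in> proj_line (cvec_of n) \<longleftrightarrow> rdot n x = 0"
proof -
  obtain x1 x2 x3 where x: "x = (x1, x2, x3)" by (cases x)
  obtain n1 n2 n3 where n: "n = (n1, n2, n3)" by (cases n)
  have form: "complex_of_real n1 * (c * complex_of_real x1) + complex_of_real n2 * (c * complex_of_real x2)
      + complex_of_real n3 * (c * complex_of_real x3) = c * complex_of_real (rdot n x)" for c
    by (simp add: x n algebra_simps)
  have CP2: "proj_pt (cvec_of x) \<in> CP2"
    using assms unfolding CP2_def by (intro CollectI exI[of _ "cvec_of x"]) simp
  have rep: "cvec_of x \<in> proj_pt (cvec_of x)"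
    unfolding proj_pt_def by (intro CollectI exI[of _ 1]) simp
  show ?thesis
  proof
    assume "proj_pt (cvec_of x) \<in> proj_line (cvec_of n)"
    with rep have "complex_of_real n1 * (1 * complex_of_real x1) + complex_of_real n2 * (1 * complex_of_real x2)
        + complex_of_real n3 * (1 * complex_of_real x3) = 0"
      unfolding proj_line_def by (auto simp: x n)
    then show "rdot n x = 0"
      unfolding form by simp
  next
    assume "rdot n x = 0"
    then have "complex_of_real n1 * (c * complex_of_real x1) + complex_of_real n2 * (c * complex_of_real x2)
        + complex_of_real n3 * (c * complex_of_real x3) = 0" for c
      by (simp only: form of_real_0 mult_zero_right)
    with CP2 show "proj_pt (cvec_of x) \<in> proj_line (cvec_of n)"
      unfolding proj_line_def proj_pt_def by (auto simp: x n cscale_def)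
  qed
qed

lemma proj_line_rscale:
  assumes "k \<noteq> 0"
  shows "proj_line (cvec_of (rscale k n)) = proj_line (cvec_of n)"
proof -
  obtain n1 n2 n3 where n: "n = (n1, n2, n3)" by (cases n)
  have "complex_of_real (k * n1) * a + complex_of_real (k * n2) * b + complex_of_real (k * n3) * c
      = complex_of_real k * (complex_of_real n1 * a + complex_of_real n2 * b + complex_of_real n3 * c)"
    for a b c by (simp add: algebra_simps)
  with assms show ?thesis
    unfolding proj_line_def n by (simp split: prod.splits)
qed

lemma rcross_neq_0_if_proj_line_neq:
  assumes "n \<noteq> (0, 0, 0)" "m \<noteq> (0, 0, 0)" "proj_line (cvec_of n) \<noteq> proj_line (cvec_of m)"
  shows "rcross n m \<noteq> (0, 0, 0)"
proof
  assume "rcross n m = (0, 0, 0)"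
  then obtain k where n: "n = rscale k m"
    using rcross_eq_0_imp_rscale assms(2) by blast
  with assms(1) have "k \<noteq> 0" by (cases m) auto
  with assms(3) show False
    using n proj_line_rscale by simp
qed

text \<open>Lagrange's identity: a vector \<open>v\<close> orthogonal to \<open>n\<close> and \<open>m\<close> satisfies
  \<open>|n \<times> m|\<^sup>2 v = (v \<cdot> (n \<times> m)) (n \<times> m)\<close>.\<close>
lemma mem_proj_lines_eq_rcross:
  assumes p: "p \<in> proj_line (cvec_of n)" "p \<in> proj_line (cvec_of m)"
    and c: "rcross n m \<noteq> (0, 0, 0)"
  shows "p = proj_pt (cvec_of (rcross n m))"
proof -
  obtain v where v0: "v \<noteq> (0, 0, 0)" and pv: "p = proj_pt v"
    using p(1) unfolding proj_line_def CP2_def by blast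
  obtain v1 v2 v3 where v: "v = (v1, v2, v3)" by (cases v)
  obtain n1 n2 n3 where n: "n = (n1, n2, n3)" by (cases n)
  obtain m1 m2 m3 where m: "m = (m1, m2, m3)" by (cases m)
  obtain c1 c2 c3 where cc: "rcross n m = (c1, c2, c3)" by (cases "rcross n m")
  have "v \<in> p"
    unfolding pv proj_pt_def by (intro CollectI exI[of _ 1]) simp
  then have en: "of_real n1 * v1 + of_real n2 * v2 + of_real n3 * v3 = 0"
    and em: "of_real m1 * v1 + of_real m2 * v2 + of_real m3 * v3 = 0"
    using p unfolding proj_line_def n m v by auto
  have "c1 = n2 * m3 - n3 * m2" "c2 = n3 * m1 - n1 * m3" "c3 = n1 * m2 - n2 * m1"
    using cc by (simp_all add: n m)
  then have ci: "of_real c1 = of_real n2 * of_real m3 - of_real n3 * (of_real m2 :: complex)"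
    "of_real c2 = of_real n3 * of_real m1 - of_real n1 * (of_real m3 :: complex)"
    "of_real c3 = of_real n1 * of_real m2 - of_real n2 * (of_real m1 :: complex)"
    by simp_all
  define C where "C = complex_of_real (rdot (c1, c2, c3) (c1, c2, c3))"
  define L where "L = v1 * of_real c1 + v2 * of_real c2 + v3 * of_real c3"
  have "rdot (c1, c2, c3) (c1, c2, c3) \<noteq> 0"
    using rdot_self_pos[of "(c1, c2, c3)"] c cc by (metis order_less_irrefl)
  then have "C \<noteq> 0"
    unfolding C_def of_real_eq_0_iff .
  moreover have "v1 * C = L * of_real c1" "v2 * C = L * of_real c2" "v3 * C = L * of_real c3"
    unfolding C_def L_def using en em ci by (simp_all, algebra+)
  ultimately have vv: "v = cscale (L / C) (cvec_of (rcross n m))"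
    unfolding v cc cscale_def by (simp add: field_simps)
  with v0 have "L / C \<noteq> 0"
    by (auto simp: cscale_def)
  with pv vv show ?thesis
    by (simp add: proj_pt_cscale)
qed

lemma real_line_normal:
  assumes "real_line L"
  obtains n where "n \<noteq> (0, 0, 0)" "L = proj_line (cvec_of n)"
  using assms unfolding real_line_def by (metis cvec_of.simps)

lemma real_lines_Int_eq_singleton:
  assumes "real_line L" "real_line M" "L \<noteq> M"
  obtains x where "x \<noteq> (0, 0, 0)" "L \<inter> M = {proj_pt (cvec_of x)}"
proof -
  obtain n m where n: "n \<noteq> (0, 0, 0)" "L = proj_line (cvec_of n)"
    and m: "m \<noteq> (0, 0, 0)" "M = proj_line (cvec_of m)"
    using assms(1,2) real_line_normal by metis
  let ?x = "rcross n m"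
  have x: "?x \<noteq> (0, 0, 0)"
    using rcross_neq_0_if_proj_line_neq n m assms(3) by simp
  have "proj_pt (cvec_of ?x) \<in> L \<inter> M"
    using proj_pt_mem_proj_line_iff[OF x] n m by simp
  moreover have "p = proj_pt (cvec_of ?x)" if "p \<in> L \<inter> M" for p
    using mem_proj_lines_eq_rcross that n m x by blast
  ultimately show ?thesis
    using that x by blast
qed

lemma real_lines_meet_once:
  assumes "\<And>L. L \<in> Arr \<Longrightarrow> real_line L" "L \<in> Arr" "M \<in> Arr" "L \<noteq> M"
  shows "\<exists>q. L \<inter> M = {q}"
proof -
  obtain x where "L \<inter> M = {proj_pt (cvec_of x)}"
    using real_lines_Int_eq_singleton[OF assms(1)[OF assms(2)] assms(1)[OF assms(3)] assms(4)] .
  then show ?thesis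
    by (rule exI)
qed

fun affine_val :: "rvec \<Rightarrow> real \<times> real \<Rightarrow> real" where
  "affine_val (a, b, c) (x, y) = a * x + b * y + c"

fun sq_dist_line :: "rvec \<Rightarrow> real \<times> real \<Rightarrow> real" where
  "sq_dist_line (a, b, c) q = (affine_val (a, b, c) q)\<^sup>2 / (a\<^sup>2 + b\<^sup>2)"

lemma two_of_three_same_side:
  fixes u :: "nat \<Rightarrow> real"
  shows "\<exists>k<3. \<exists>m<3. k \<noteq> m \<and> \<bar>u m - u k\<bar> \<le> \<bar>u m\<bar>"
proof -
  have "\<bar>u 1 - u 0\<bar> \<le> \<bar>u 1\<bar> \<or> \<bar>u 0 - u 1\<bar> \<le> \<bar>u 0\<bar> \<or> \<bar>u 2 - u 0\<bar> \<le> \<bar>u 2\<bar>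
      \<or> \<bar>u 0 - u 2\<bar> \<le> \<bar>u 0\<bar> \<or> \<bar>u 2 - u 1\<bar> \<le> \<bar>u 2\<bar> \<or> \<bar>u 1 - u 2\<bar> \<le> \<bar>u 1\<bar>"
    by arith
  moreover have "(0::nat) < 3" "(1::nat) < 3" "(2::nat) < 3" "(0::nat) \<noteq> 1" "(0::nat) \<noteq> 2" "(1::nat) \<noteq> 2"
    by simp_all
  ultimately show ?thesis
    by (metis (no_types))
qed

text \<open>Coordinates: \<open>l = (A, B, C)\<close>, \<open>P = (p1, p2)\<close>, \<open>Q\<^sub>k = (q1, q2)\<close>, \<open>Q\<^sub>m = (s1, s2)\<close>, and
  \<open>(Am, Bm, Cm)\<close> is the line \<open>P Q\<^sub>m\<close>; \<open>uk\<close>, \<open>um\<close> are the signed positions of \<open>Q\<^sub>k\<close>, \<open>Q\<^sub>m\<close>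
  along \<open>l\<close>, measured from the foot \<open>F\<close> of \<open>P\<close>. Since \<open>Q\<^sub>k\<close> is at most as far from \<open>Q\<^sub>m\<close> as \<open>F\<close> is,
  its distance to \<open>P Q\<^sub>m\<close> is at most that of \<open>F\<close>, which is less than \<open>|P F|\<close>.\<close>
lemma kelly_inequality:
  fixes A B C p1 p2 q1 q2 s1 s2 Am Bm Cm :: real
  assumes lq: "A * q1 + B * q2 + C = 0" and ls: "A * s1 + B * s2 + C = 0"
    and lp: "A * p1 + B * p2 + C \<noteq> 0" and qs: "(q1, q2) \<noteq> (s1, s2)"
    and gnz: "(Am, Bm, Cm) \<noteq> (0, 0, 0)"
    and gp: "Am * p1 + Bm * p2 + Cm = 0" and gs: "Am * s1 + Bm * s2 + Cm = 0"
    and between: "\<bar>(A * (s2 - p2) - B * (s1 - p1)) - (A * (q2 - p2) - B * (q1 - p1))\<bar>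
      \<le> \<bar>A * (s2 - p2) - B * (s1 - p1)\<bar>"
  shows "Am * q1 + Bm * q2 + Cm \<noteq> 0"
    and "(Am * q1 + Bm * q2 + Cm)\<^sup>2 / (Am\<^sup>2 + Bm\<^sup>2) < (A * p1 + B * p2 + C)\<^sup>2 / (A\<^sup>2 + B\<^sup>2)"
proof -
  define h where "h = A * p1 + B * p2 + C"
  define a where "a = A\<^sup>2 + B\<^sup>2"
  define b where "b = Am\<^sup>2 + Bm\<^sup>2"
  define E where "E = Am * q1 + Bm * q2 + Cm"
  define uk where "uk = A * (q2 - p2) - B * (q1 - p1)"
  define um where "um = A * (s2 - p2) - B * (s1 - p1)"
  define D where "D = (s1 - p1)\<^sup>2 + (s2 - p2)\<^sup>2"
  define X where "X = (s1 - p1) * (q2 - p2) - (s2 - p2) * (q1 - p1)"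
  have h0: "h \<noteq> 0" using lp h_def by simp
  have a: "a > 0" using lq lp unfolding a_def sum_power2_gt_zero_iff by auto
  have b: "b > 0" using gp gnz unfolding b_def sum_power2_gt_zero_iff by auto
  have D: "D > 0" using ls lp unfolding D_def sum_power2_gt_zero_iff by auto
  have i1: "D * E\<^sup>2 = b * X\<^sup>2"
    unfolding D_def E_def b_def X_def using gp gs by algebra
  have i2: "a * X = h * (um - uk)"
    unfolding a_def X_def h_def um_def uk_def using lq ls by algebra
  have i3: "a * D = h\<^sup>2 + um\<^sup>2"
    unfolding a_def D_def h_def um_def using ls by algebra
  show "E \<noteq> 0"
  proof
    assume "E = 0"
    with i1 b have "X = 0" by simp
    with i2 h0 have "um = uk" by simp
    then have "a * s1 = a * q1 \<and> a * s2 = a * q2"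
      unfolding a_def um_def uk_def using lq ls by algebra
    with a qs show False by simp
  qed
  have "(um - uk)\<^sup>2 \<le> um\<^sup>2"
    using between unfolding um_def uk_def by (simp add: abs_le_square_iff)
  with h0 have closer: "(um - uk)\<^sup>2 < h\<^sup>2 + um\<^sup>2"
    by (smt (verit) zero_less_power2)
  have "(E\<^sup>2 * a) * (a * D) = b * (h * (um - uk))\<^sup>2"
    using i1 i2[symmetric] by (simp add: algebra_simps power2_eq_square)
  also have "\<dots> = b * h\<^sup>2 * (um - uk)\<^sup>2"
    by (simp add: power_mult_distrib)
  also have "\<dots> < b * h\<^sup>2 * (h\<^sup>2 + um\<^sup>2)"
    using closer b h0 by simp
  also have "\<dots> = (h\<^sup>2 * b) * (a * D)"
    using i3 by simp
  finally have "E\<^sup>2 * a < h\<^sup>2 * b"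
    using a D by (simp add: mult_less_cancel_right)
  with a b show "E\<^sup>2 / b < h\<^sup>2 / a"
    by (simp add: field_simps)
qed

lemma kelly_closer_pair:
  fixes Q :: "nat \<Rightarrow> real \<times> real" and g :: "nat \<Rightarrow> rvec"
  assumes Ql: "\<And>k. k < 3 \<Longrightarrow> affine_val l (Q k) = 0" and Pl: "affine_val l P \<noteq> 0"
    and Q_inj: "inj_on Q {..<3}"
    and g_nz: "\<And>k. k < 3 \<Longrightarrow> g k \<noteq> (0, 0, 0)"
    and gP: "\<And>k. k < 3 \<Longrightarrow> affine_val (g k) P = 0"
    and gQ: "\<And>k. k < 3 \<Longrightarrow> affine_val (g k) (Q k) = 0"
  obtains k m where "k < 3" "m < 3" "affine_val (g m) (Q k) \<noteq> 0"
    "sq_dist_line (g m) (Q k) < sq_dist_line l P"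
proof -
  obtain A B C where l: "l = (A, B, C)" by (cases l)
  obtain p1 p2 where P: "P = (p1, p2)" by (cases P)
  obtain k m where km: "k < 3" "m < 3" "k \<noteq> m"
    and between: "\<bar>(A * (snd (Q m) - p2) - B * (fst (Q m) - p1)) - (A * (snd (Q k) - p2) - B * (fst (Q k) - p1))\<bar>
      \<le> \<bar>A * (snd (Q m) - p2) - B * (fst (Q m) - p1)\<bar>"
    using two_of_three_same_side[of "\<lambda>k. A * (snd (Q k) - p2) - B * (fst (Q k) - p1)"] by blast
  obtain q1 q2 where q: "Q k = (q1, q2)" by (cases "Q k")
  obtain s1 s2 where s: "Q m = (s1, s2)" by (cases "Q m")
  obtain Am Bm Cm where g: "g m = (Am, Bm, Cm)" by (cases "g m")
  have "Q k \<noteq> Q m"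
    using Q_inj km by (auto dest: inj_onD)
  with km Ql[OF km(1)] Ql[OF km(2)] Pl g_nz[OF km(2)] gP[OF km(2)] gQ[OF km(2)] between
  have "Am * q1 + Bm * q2 + Cm \<noteq> 0"
    "(Am * q1 + Bm * q2 + Cm)\<^sup>2 / (Am\<^sup>2 + Bm\<^sup>2) < (A * p1 + B * p2 + C)\<^sup>2 / (A\<^sup>2 + B\<^sup>2)"
    using kelly_inequality[of A q1 B q2 C s1 s2 p1 p2 Am Bm Cm] by (simp_all add: l P q s g)
  with km show ?thesis
    using that by (simp add: l P q g)
qed

definition kelly_configuration :: "(real \<times> real) set \<Rightarrow> rvec set \<Rightarrow> bool" where
  "kelly_configuration Pts Ls \<longleftrightarrow> (\<forall>P\<in>Pts. \<forall>l\<in>Ls. affine_val l P \<noteq> 0 \<longrightarrow>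
     (\<exists>Q g. inj_on Q {..<3::nat} \<and> (\<forall>k<3. Q k \<in> Pts \<and> affine_val l (Q k) = 0 \<and> g k \<in> Ls
        \<and> g k \<noteq> (0, 0, 0) \<and> affine_val (g k) P = 0 \<and> affine_val (g k) (Q k) = 0)))"

text \<open>Kelly's proof of the Sylvester--Gallai theorem: a non-incident pair \<open>(P, l)\<close> at minimal
  distance would yield a closer one.\<close>
lemma kelly_configuration_incident:
  assumes "finite Pts" "finite Ls" "kelly_configuration Pts Ls" "P \<in> Pts" "l \<in> Ls"
  shows "affine_val l P = 0"
proof (rule ccontr)
  define S where "S = {(P, l) \<in> Pts \<times> Ls. affine_val l P \<noteq> 0}"
  assume "affine_val l P \<noteq> 0"
  with assms(4,5) have "(P, l) \<in> S"
    unfolding S_def by simp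
  moreover have "finite S"
    unfolding S_def using assms(1,2) by (auto intro: finite_subset)
  ultimately obtain z where arg_min: "is_arg_min (\<lambda>(P, l). sq_dist_line l P) (\<lambda>z. z \<in> S) z"
    using ex_is_arg_min_if_finite by blast
  obtain P0 l0 where "z = (P0, l0)"
    by (cases z)
  with arg_min have min: "(P0, l0) \<in> S"
    "\<And>P' l'. (P', l') \<in> S \<Longrightarrow> sq_dist_line l0 P0 \<le> sq_dist_line l' P'"
    unfolding is_arg_min_linorder by fastforce+
  with \<open>kelly_configuration Pts Ls\<close> obtain Q :: "nat \<Rightarrow> real \<times> real" and g
    where "inj_on Q {..<3}" and Qg: "\<forall>k<3. Q k \<in> Pts \<and> affine_val l0 (Q k) = 0 \<and> g k \<in> Ls
        \<and> g k \<noteq> (0, 0, 0) \<and> affine_val (g k) P0 = 0 \<and> affine_val (g k) (Q k) = 0"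
    unfolding kelly_configuration_def S_def by blast
  then obtain k m where "k < 3" "m < 3" "affine_val (g m) (Q k) \<noteq> 0"
      "sq_dist_line (g m) (Q k) < sq_dist_line l0 P0"
    using kelly_closer_pair[of l0 Q P0 g] min(1) unfolding S_def by auto
  with min(2)[of "Q k" "g m"] Qg show False
    unfolding S_def by force
qed

text \<open>The affine chart with line at infinity \<open>(1, r, r\<^sup>2)\<close>. Taking it on the moment curve, a nonzero
  point lies at infinity for at most two values of \<open>r\<close>, so any finite set of points fits into one chart.\<close>
fun chart_pt :: "real \<Rightarrow> rvec \<Rightarrow> real \<times> real" where
  "chart_pt r (x1, x2, x3) = (x2 / rdot (1, r, r\<^sup>2) (x1, x2, x3), x3 / rdot (1, r, r\<^sup>2) (x1, x2, x3))"

fun chart_line :: "real \<Rightarrow> rvec \<Rightarrow> rvec" where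
  "chart_line r (n1, n2, n3) = (n2 - r * n1, n3 - r\<^sup>2 * n1, n1)"

lemma affine_val_chart:
  assumes "rdot (1, r, r\<^sup>2) x \<noteq> 0"
  shows "affine_val (chart_line r n) (chart_pt r x) = rdot n x / rdot (1, r, r\<^sup>2) x"
proof -
  obtain x1 x2 x3 where x: "x = (x1, x2, x3)" by (cases x)
  obtain n1 n2 n3 where n: "n = (n1, n2, n3)" by (cases n)
  have "rdot n x = (n2 - r * n1) * x2 + (n3 - r\<^sup>2 * n1) * x3 + n1 * rdot (1, r, r\<^sup>2) x"
    by (simp add: x n algebra_simps)
  with assms show ?thesis
    by (simp add: x n add_divide_distrib diff_divide_distrib)
qed

lemma chart_line_neq_0: "n \<noteq> (0, 0, 0) \<Longrightarrow> chart_line r n \<noteq> (0, 0, 0)"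
  by (cases n) auto

lemma chart_pt_eq_imp_proj_pt_eq:
  assumes "chart_pt r x = chart_pt r y" "rdot (1, r, r\<^sup>2) x \<noteq> 0" "rdot (1, r, r\<^sup>2) y \<noteq> 0"
  shows "proj_pt (cvec_of x) = proj_pt (cvec_of y)"
proof -
  define k where "k = rdot (1, r, r\<^sup>2) x / rdot (1, r, r\<^sup>2) y"
  obtain x1 x2 x3 where x: "x = (x1, x2, x3)" by (cases x)
  obtain y1 y2 y3 where y: "y = (y1, y2, y3)" by (cases y)
  have "x2 * rdot (1, r, r\<^sup>2) y = y2 * rdot (1, r, r\<^sup>2) x"
    "x3 * rdot (1, r, r\<^sup>2) y = y3 * rdot (1, r, r\<^sup>2) x"
    using assms unfolding x y by (simp_all add: field_simps)
  moreover have "x1 * rdot (1, r, r\<^sup>2) y = y1 * rdot (1, r, r\<^sup>2) x"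
    using calculation unfolding x y by simp algebra
  ultimately have "x = rscale k y"
    using assms(3) unfolding x y k_def by (simp add: field_simps)
  moreover have "k \<noteq> 0"
    using assms(2,3) by (simp add: k_def)
  ultimately show ?thesis
    by (simp add: cvec_of_rscale proj_pt_cscale)
qed

lemma finite_moment_roots:
  assumes "x \<noteq> (0, 0, 0)"
  shows "finite {r. rdot (1, r, r\<^sup>2) x = 0}"
proof -
  obtain x1 x2 x3 where x: "x = (x1, x2, x3)" by (cases x)
  have "[:x1, x2, x3:] \<noteq> 0"
    using assms x by auto
  then have "finite {r. poly [:x1, x2, x3:] r = 0}"
    by (rule poly_roots_finite)
  moreover have "poly [:x1, x2, x3:] r = rdot (1, r, r\<^sup>2) x" for r
    by (simp add: x algebra_simps power2_eq_square)
  ultimately show ?thesis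
    by simp
qed

lemma real_points_affine_model:
  assumes "finite X" and real_pts: "\<And>p. p \<in> X \<Longrightarrow> \<exists>x. x \<noteq> (0, 0, 0) \<and> p = proj_pt (cvec_of x)"
  obtains \<phi> :: "cvec set \<Rightarrow> real \<times> real" and \<psi> :: "cvec set set \<Rightarrow> rvec"
  where "inj_on \<phi> X" "\<And>L. real_line L \<Longrightarrow> \<psi> L \<noteq> (0, 0, 0)"
    "\<And>p L. p \<in> X \<Longrightarrow> real_line L \<Longrightarrow> p \<in> L \<longleftrightarrow> affine_val (\<psi> L) (\<phi> p) = 0"
proof -
  obtain rep where rep: "\<And>p. p \<in> X \<Longrightarrow> rep p \<noteq> (0, 0, 0) \<and> proj_pt (cvec_of (rep p)) = p"
    using real_pts by metis
  define nrm where "nrm L = (SOME n. n \<noteq> (0, 0, 0) \<and> proj_line (cvec_of n) = L)" for L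
  have nrm: "nrm L \<noteq> (0, 0, 0) \<and> proj_line (cvec_of (nrm L)) = L" if "real_line L" for L
  proof -
    have "\<exists>n. n \<noteq> (0, 0, 0) \<and> proj_line (cvec_of n) = L"
      using real_line_normal[OF that] by metis
    then show ?thesis
      unfolding nrm_def by (rule someI_ex)
  qed
  have "finite (\<Union>p\<in>X. {r. rdot (1, r, r\<^sup>2) (rep p) = 0})"
    using assms(1) rep finite_moment_roots by blast
  then obtain r where r: "\<And>p. p \<in> X \<Longrightarrow> rdot (1, r, r\<^sup>2) (rep p) \<noteq> 0"
    using ex_new_if_finite[OF infinite_UNIV_char_0] by blast
  show ?thesis
  proof
    show "inj_on (\<lambda>p. chart_pt r (rep p)) X"
    proof (rule inj_onI)
      fix p q assume "p \<in> X" "q \<in> X" "chart_pt r (rep p) = chart_pt r (rep q)"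
      then have "proj_pt (cvec_of (rep p)) = proj_pt (cvec_of (rep q))"
        using r chart_pt_eq_imp_proj_pt_eq by blast
      with rep \<open>p \<in> X\<close> \<open>q \<in> X\<close> show "p = q"
        by simp
    qed
    show "chart_line r (nrm L) \<noteq> (0, 0, 0)" if "real_line L" for L
      using nrm[OF that, THEN conjunct1] by (rule chart_line_neq_0)
    show "p \<in> L \<longleftrightarrow> affine_val (chart_line r (nrm L)) (chart_pt r (rep p)) = 0"
      if "p \<in> X" "real_line L" for p L
      using proj_pt_mem_proj_line_iff[of "rep p" "nrm L"] rep[OF that(1)] nrm[OF that(2)]
        affine_val_chart[OF r[OF that(1)]] r[OF that(1)] by simp
  qed
qed

lemma is_4net_class_subset: "is_4net Arr A X d \<Longrightarrow> i \<in> {1..4} \<Longrightarrow> A i \<subseteq> Arr"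
  unfolding is_4net_def by (elim conjE) auto

lemma is_4net_class_of_line:
  "is_4net Arr A X d \<Longrightarrow> H \<in> Arr \<Longrightarrow> \<exists>i\<in>{1..4}. H \<in> A i"
  unfolding is_4net_def by (elim conjE) auto

lemma is_4net_class_unique:
  "is_4net Arr A X d \<Longrightarrow> i \<in> {1..4} \<Longrightarrow> j \<in> {1..4} \<Longrightarrow> H \<in> A i \<Longrightarrow> H \<in> A j \<Longrightarrow> i = j"
  unfolding is_4net_def by (elim conjE) blast

lemma is_4net_Int_subset:
  "is_4net Arr A X d \<Longrightarrow> i \<in> {1..4} \<Longrightarrow> j \<in> {1..4} \<Longrightarrow> i \<noteq> j \<Longrightarrow> H \<in> A i \<Longrightarrow> H' \<in> A j
    \<Longrightarrow> H \<inter> H' \<subseteq> X"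
  unfolding is_4net_def by (elim conjE) blast

lemma is_4net_ex1_line:
  assumes "is_4net Arr A X d" "p \<in> X" "i \<in> {1..4}"
  shows "\<exists>!H. H \<in> A i \<and> p \<in> H"
proof -
  have "\<forall>p\<in>X. \<forall>i\<in>{1..4}. \<exists>!H. H \<in> A i \<and> p \<in> H"
    using assms(1) unfolding is_4net_def by (elim conjE) assumption
  with assms(2,3) show ?thesis
    by blast
qed

lemma is_4net_two_lines_in_class:
  assumes "is_4net Arr A X d" "i \<in> {1..4}"
  obtains H H' where "H \<in> A i" "H' \<in> A i" "H \<noteq> H'"
proof -
  have "card (A i) \<ge> 2"
    using assms unfolding is_4net_def by (elim conjE) auto
  then have "finite (A i)" "\<not> card (A i) \<le> Suc 0"
    by (auto intro: card_ge_0_finite)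
  then show ?thesis
    using that card_le_Suc0_iff_eq by blast
qed

lemma is_4net_point_on_two_lines:
  assumes net: "is_4net Arr A X d" and "p \<in> X"
  obtains L M where "L \<in> Arr" "M \<in> Arr" "L \<noteq> M" "p \<in> L" "p \<in> M"
proof -
  have "(1::nat) \<in> {1..4}" "(2::nat) \<in> {1..4}"
    by auto
  then obtain L M where "L \<in> A 1" "p \<in> L" "M \<in> A 2" "p \<in> M"
    using is_4net_ex1_line[OF net \<open>p \<in> X\<close>] by metis
  moreover have "L \<noteq> M"
    using is_4net_class_unique[OF net, of 1 2] calculation by auto
  ultimately show ?thesis
    using that is_4net_class_subset[OF net, of 1] is_4net_class_subset[OF net, of 2] by auto
qed

lemma is_4net_finite_points:
  assumes net: "is_4net Arr A X d" and "finite Arr"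
    and meet: "\<And>L M. L \<in> Arr \<Longrightarrow> M \<in> Arr \<Longrightarrow> L \<noteq> M \<Longrightarrow> \<exists>q. L \<inter> M = {q}"
  shows "finite X"
proof (rule finite_subset)
  show "X \<subseteq> (\<Union>(L, M)\<in>{(L, M) \<in> Arr \<times> Arr. L \<noteq> M}. L \<inter> M)"
    using is_4net_point_on_two_lines[OF net] by blast
  show "finite (\<Union>(L, M)\<in>{(L, M) \<in> Arr \<times> Arr. L \<noteq> M}. L \<inter> M)"
  proof (rule finite_UN_I)
    show "finite {(L, M) \<in> Arr \<times> Arr. L \<noteq> M}"
      using \<open>finite Arr\<close> by (auto intro: finite_subset[of _ "Arr \<times> Arr"])
    show "finite (case LM of (L, M) \<Rightarrow> L \<inter> M)" if "LM \<in> {(L, M) \<in> Arr \<times> Arr. L \<noteq> M}" for LM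
    proof (cases LM)
      case (Pair L M)
      with that have "L \<in> Arr" "M \<in> Arr" "L \<noteq> M"
        by simp_all
      then have "\<exists>q. L \<inter> M = {q}"
        by (rule meet)
      then obtain q where "L \<inter> M = {q}" ..
      with Pair show ?thesis
        by simp
    qed
  qed
qed

lemma is_4net_real_points:
  assumes net: "is_4net Arr A X d" and real: "\<And>L. L \<in> Arr \<Longrightarrow> real_line L" and "p \<in> X"
  shows "\<exists>x. x \<noteq> (0, 0, 0) \<and> p = proj_pt (cvec_of x)"
proof -
  obtain L M where LM: "L \<in> Arr" "M \<in> Arr" "L \<noteq> M" and "p \<in> L" "p \<in> M"
    using is_4net_point_on_two_lines[OF net \<open>p \<in> X\<close>] by blast
  obtain x where "x \<noteq> (0, 0, 0)" "L \<inter> M = {proj_pt (cvec_of x)}"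
    using real_lines_Int_eq_singleton[OF real[OF LM(1)] real[OF LM(2)] LM(3)] .
  moreover from this(2) \<open>p \<in> L\<close> \<open>p \<in> M\<close> have "p = proj_pt (cvec_of x)"
    by auto
  ultimately show ?thesis
    by blast
qed

lemma lines_through_point_meet_line_distinct:
  assumes meet: "\<And>L M. L \<in> Arr \<Longrightarrow> M \<in> Arr \<Longrightarrow> L \<noteq> M \<Longrightarrow> \<exists>q. L \<inter> M = {q}"
    and "G \<in> Arr" "G' \<in> Arr" "G \<noteq> G'" "p \<in> G" "p \<in> G'" "p \<notin> H"
    and "a \<in> G" "a \<in> H" "a' \<in> G'" "a' \<in> H"
  shows "a \<noteq> a'"
proof
  assume "a = a'"
  obtain q where q: "G \<inter> G' = {q}"
    using meet[OF assms(2-4)] ..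
  have "p \<in> G \<inter> G'" "a \<in> G \<inter> G'"
    using assms(5,6,8,10) \<open>a = a'\<close> by simp_all
  then have "p = a"
    unfolding q by simp
  with assms(7,9) show False
    by simp
qed

lemma is_4net_three_joins:
  assumes net: "is_4net Arr A X d"
    and meet: "\<And>L M. L \<in> Arr \<Longrightarrow> M \<in> Arr \<Longrightarrow> L \<noteq> M \<Longrightarrow> \<exists>q. L \<inter> M = {q}"
    and "p \<in> X" "H \<in> Arr" "p \<notin> H"
  obtains G a where "inj_on a {..<3::nat}"
    "\<And>k. k < 3 \<Longrightarrow> G k \<in> Arr \<and> p \<in> G k \<and> a k \<in> X \<and> a k \<in> G k \<and> a k \<in> H"
proof -
  obtain i where i: "i \<in> {1..4}" "H \<in> A i"
    using is_4net_class_of_line[OF net \<open>H \<in> Arr\<close>] by blast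
  have "card ({1..4} - {i}) = 3"
    using i(1) by simp
  then obtain j :: "nat \<Rightarrow> nat" where j: "bij_betw j {..<3} ({1..4} - {i})"
    using ex_bij_betw_nat_finite[of "{1..4} - {i}"] by (auto simp: atLeast0LessThan)
  define G where "G k = (THE G. G \<in> A (j k) \<and> p \<in> G)" for k
  have j_range: "j k \<in> {1..4}" "j k \<noteq> i" if "k < 3" for k
    using bij_betw_apply[OF j, of k] that by auto
  have G: "G k \<in> A (j k)" "p \<in> G k" if "k < 3" for k
    using theI'[OF is_4net_ex1_line[OF net \<open>p \<in> X\<close> j_range(1)[OF that]]] unfolding G_def by auto
  have G_Arr: "G k \<in> Arr" if "k < 3" for k
    using G(1)[OF that] is_4net_class_subset[OF net j_range(1)[OF that]] by blast
  have "G k \<noteq> H" if "k < 3" for k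
    using G(2)[OF that] \<open>p \<notin> H\<close> by blast
  then have "\<forall>k<3. \<exists>q. G k \<inter> H = {q}"
    using meet G_Arr \<open>H \<in> Arr\<close> by blast
  then obtain a where a: "\<And>k. k < 3 \<Longrightarrow> G k \<inter> H = {a k}"
    by metis
  then have aGH: "a k \<in> G k" "a k \<in> H" if "k < 3" for k
    using that by auto
  have a_X: "a k \<in> X" if "k < 3" for k
    using is_4net_Int_subset[OF net j_range(1)[OF that] i(1) j_range(2)[OF that] G(1)[OF that] i(2)] aGH[OF that]
    by blast
  have "inj_on a {..<3}"
  proof (rule inj_onI, rule ccontr)
    fix k m assume "k \<in> {..<3}" "m \<in> {..<3}" "a k = a m" "k \<noteq> m"
    then have km: "k < 3" "m < 3" "j k \<noteq> j m"
      using bij_betw_imp_inj_on[OF j] by (auto dest: inj_onD)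
    then have "G k \<noteq> G m"
      using is_4net_class_unique[OF net j_range(1)[OF km(1)] j_range(1)[OF km(2)]] G(1)[OF km(1)] G(1)[OF km(2)]
      by auto
    with \<open>a k = a m\<close> show False
      using lines_through_point_meet_line_distinct[OF meet G_Arr[OF km(1)] G_Arr[OF km(2)] _ G(2)[OF km(1)]
          G(2)[OF km(2)] \<open>p \<notin> H\<close> aGH[OF km(1)] aGH[OF km(2)]] by blast
  qed
  then show ?thesis
    using that G G_Arr a_X aGH by blast
qed

lemma is_4net_nonincident_pair:
  assumes net: "is_4net Arr A X d"
    and meet: "\<And>L M. L \<in> Arr \<Longrightarrow> M \<in> Arr \<Longrightarrow> L \<noteq> M \<Longrightarrow> \<exists>q. L \<inter> M = {q}"
  obtains p H where "p \<in> X" "H \<in> Arr" "p \<notin> H"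
proof -
  have "(1::nat) \<in> {1..4}" "(2::nat) \<in> {1..4}"
    by auto
  obtain H H' where H: "H \<in> A 1" "H' \<in> A 1" "H \<noteq> H'"
    using is_4net_two_lines_in_class[OF net \<open>1 \<in> {1..4}\<close>] by blast
  obtain K where K: "K \<in> A 2"
    using is_4net_two_lines_in_class[OF net \<open>2 \<in> {1..4}\<close>] by blast
  have Arr: "H \<in> Arr" "H' \<in> Arr" "K \<in> Arr"
    using H K is_4net_class_subset[OF net \<open>1 \<in> {1..4}\<close>] is_4net_class_subset[OF net \<open>2 \<in> {1..4}\<close>]
    by auto
  have "H \<noteq> K"
    using is_4net_class_unique[OF net \<open>1 \<in> {1..4}\<close> \<open>2 \<in> {1..4}\<close>] H(1) K by auto
  then obtain q where q: "H \<inter> K = {q}"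
    using meet[OF Arr(1,3)] by blast
  have "q \<in> X"
    using is_4net_Int_subset[OF net \<open>1 \<in> {1..4}\<close> \<open>2 \<in> {1..4}\<close> _ H(1) K] q by auto
  moreover have "q \<notin> H'"
    using is_4net_ex1_line[OF net \<open>q \<in> X\<close> \<open>1 \<in> {1..4}\<close>] H q by blast
  ultimately show ?thesis
    using that Arr(2) by blast
qed

lemma is_4net_kelly_configuration:
  assumes net: "is_4net Arr A X d"
    and meet: "\<And>L M. L \<in> Arr \<Longrightarrow> M \<in> Arr \<Longrightarrow> L \<noteq> M \<Longrightarrow> \<exists>q. L \<inter> M = {q}"
    and "inj_on \<phi> X" and \<psi>_nz: "\<And>L. L \<in> Arr \<Longrightarrow> \<psi> L \<noteq> (0, 0, 0)"
    and incidence: "\<And>p L. p \<in> X \<Longrightarrow> L \<in> Arr \<Longrightarrow> p \<in> L \<longleftrightarrow> affine_val (\<psi> L) (\<phi> p) = 0"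
  shows "kelly_configuration (\<phi> ` X) (\<psi> ` Arr)"
  unfolding kelly_configuration_def
proof (intro ballI impI)
  fix P l assume "P \<in> \<phi> ` X" "l \<in> \<psi> ` Arr" "affine_val l P \<noteq> 0"
  obtain p where p: "p \<in> X" "P = \<phi> p"
    using \<open>P \<in> \<phi> ` X\<close> by blast
  obtain H where H: "H \<in> Arr" "l = \<psi> H"
    using \<open>l \<in> \<psi> ` Arr\<close> by blast
  have "affine_val (\<psi> H) (\<phi> p) \<noteq> 0"
    using \<open>affine_val l P \<noteq> 0\<close> unfolding p(2) H(2) .
  then have "p \<notin> H"
    using incidence[OF p(1) H(1)] by simp
  then obtain G a where "inj_on a {..<3::nat}"
    and Ga: "\<And>k. k < 3 \<Longrightarrow> G k \<in> Arr \<and> p \<in> G k \<and> a k \<in> X \<and> a k \<in> G k \<and> a k \<in> H"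
    using is_4net_three_joins[OF net meet p(1) H(1)] by blast
  have "inj_on (\<phi> \<circ> a) {..<3}"
  proof (rule comp_inj_on)
    show "inj_on \<phi> (a ` {..<3})"
      using \<open>inj_on \<phi> X\<close> Ga by (auto intro: inj_on_subset)
  qed fact
  moreover have "\<forall>k<3. (\<phi> \<circ> a) k \<in> \<phi> ` X \<and> affine_val l ((\<phi> \<circ> a) k) = 0 \<and> (\<psi> \<circ> G) k \<in> \<psi> ` Arr
    \<and> (\<psi> \<circ> G) k \<noteq> (0, 0, 0) \<and> affine_val ((\<psi> \<circ> G) k) P = 0 \<and> affine_val ((\<psi> \<circ> G) k) ((\<phi> \<circ> a) k) = 0"
    using Ga incidence \<psi>_nz p H by auto
  ultimately show "\<exists>Q g. inj_on Q {..<3::nat} \<and> (\<forall>k<3. Q k \<in> \<phi> ` X \<and> affine_val l (Q k) = 0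
      \<and> g k \<in> \<psi> ` Arr \<and> g k \<noteq> (0, 0, 0) \<and> affine_val (g k) P = 0 \<and> affine_val (g k) (Q k) = 0)"
    by blast
qed

theorem theorem5p2:
  shows "\<not> (\<exists>Arr A X d. finite Arr \<and> (\<forall>L\<in>Arr. real_line L) \<and> is_4net Arr A X d)"
proof
  assume "\<exists>Arr A X d. finite Arr \<and> (\<forall>L\<in>Arr. real_line L) \<and> is_4net Arr A X d"
  then obtain Arr A X d where "finite Arr" and real: "\<And>L. L \<in> Arr \<Longrightarrow> real_line L"
    and net: "is_4net Arr A X d"
    by blast
  note meet = real_lines_meet_once[of Arr, OF real]
  have "finite X"
    by (rule is_4net_finite_points[OF net \<open>finite Arr\<close> meet])
  then obtain \<phi> \<psi> where "inj_on \<phi> X" and \<psi>_nz: "\<And>L. real_line L \<Longrightarrow> \<psi> L \<noteq> (0, 0, 0)"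
    and incidence: "\<And>p L. p \<in> X \<Longrightarrow> real_line L \<Longrightarrow> p \<in> L \<longleftrightarrow> affine_val (\<psi> L) (\<phi> p) = 0"
    using real_points_affine_model is_4net_real_points[OF net real] by blast
  have "kelly_configuration (\<phi> ` X) (\<psi> ` Arr)"
    using is_4net_kelly_configuration[OF net meet \<open>inj_on \<phi> X\<close> \<psi>_nz[OF real] incidence[OF _ real]] .
  moreover obtain p H where "p \<in> X" "H \<in> Arr" "p \<notin> H"
    using is_4net_nonincident_pair[OF net meet] by blast
  ultimately have "affine_val (\<psi> H) (\<phi> p) = 0"
    using kelly_configuration_incident \<open>finite X\<close> \<open>finite Arr\<close> by blast
  with \<open>p \<notin> H\<close> show False
    using incidence[OF \<open>p \<in> X\<close> real[OF \<open>H \<in> Arr\<close>]] by simp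
qed

end
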